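(* Let $p>q\ge2$, fix $\arg\mu\in\mathbb{R}$ and $k\in\{0,\dots,r-1\}$, and for $\rho>0$ let $N(\rho)$ be the number of $\theta\in[0,2\pi)$ with $T(\theta;\rho)=0$. If $0<\rho_1<\rho_2$ are such that all zeros of $T(\cdot;\rho_1)$ and of $T(\cdot;\rho_2)$ are simple, then $N(\rho_1)\ge N(\rho_2)$; that is, the number of solutions of $T(\theta;\rho)=0$ is monotone non-increasing in $\rho=|\mu|\in(0,\infty)$.
   Context: Let $r=\gcd(p-1,q-1)$, $A=p^{-1/(p-1)}$, $B=q^{-1/(q-1)}$, $m=\frac{(p-1)(q+1)}{2r}$, $n=\frac{(p+1)(q-1)}{2r}$, $c_k=\frac{1}{p-1}(-2\arg\mu+2\pi k)$, $c_k'=\frac{p+1}{2}c_k$, $C=\frac{(p-1)B}{(q-1)A}>0$, and for $\rho>0$, $T(\theta;\rho)=(-1)^k\rho\sin(n\theta+c_k')+C\sin(m\theta)$. (The zero set of $T(\cdot;\rho)$ is $2\pi$-periodic.) *)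

theory Defs
  imports "HOL-Analysis.Analysis"
begin

definition r_par :: "nat \<Rightarrow> nat \<Rightarrow> nat" where
  "r_par p q = gcd (p - 1) (q - 1)"

definition A_par :: "nat \<Rightarrow> real" where
  "A_par p = real p powr (- 1 / (real p - 1))"

definition B_par :: "nat \<Rightarrow> real" where
  "B_par q = real q powr (- 1 / (real q - 1))"

definition m_par :: "nat \<Rightarrow> nat \<Rightarrow> real" where
  "m_par p q = (real p - 1) * (real q + 1) / (2 * real (r_par p q))"

definition n_par :: "nat \<Rightarrow> nat \<Rightarrow> real" where
  "n_par p q = (real p + 1) * (real q - 1) / (2 * real (r_par p q))"

definition c_par :: "nat \<Rightarrow> real \<Rightarrow> nat \<Rightarrow> real" where
  "c_par p argmu k = (1 / (real p - 1)) * (- 2 * argmu + 2 * pi * real k)"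

definition c'_par :: "nat \<Rightarrow> real \<Rightarrow> nat \<Rightarrow> real" where
  "c'_par p argmu k = (real p + 1) / 2 * c_par p argmu k"

definition C_par :: "nat \<Rightarrow> nat \<Rightarrow> real" where
  "C_par p q = ((real p - 1) * B_par q) / ((real q - 1) * A_par p)"

definition T_fun :: "nat \<Rightarrow> nat \<Rightarrow> real \<Rightarrow> nat \<Rightarrow> real \<Rightarrow> real \<Rightarrow> real" where
  "T_fun p q argmu k \<rho> \<theta> =
     (-1) ^ k * \<rho> * sin (n_par p q * \<theta> + c'_par p argmu k) + C_par p q * sin (m_par p q * \<theta>)"

definition N_count :: "nat \<Rightarrow> nat \<Rightarrow> real \<Rightarrow> nat \<Rightarrow> real \<Rightarrow> nat" where
  "N_count p q argmu k \<rho> = card {\<theta>. 0 \<le> \<theta> \<and> \<theta> < 2 * pi \<and> T_fun p q argmu k \<rho> \<theta> = 0}"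

definition simple_zeros :: "nat \<Rightarrow> nat \<Rightarrow> real \<Rightarrow> nat \<Rightarrow> real \<Rightarrow> bool" where
  "simple_zeros p q argmu k \<rho> =
     (\<forall>\<theta>. T_fun p q argmu k \<rho> \<theta> = 0 \<longrightarrow> deriv (T_fun p q argmu k \<rho>) \<theta> \<noteq> 0)"

end

theory Submission
  imports Defs
begin

text \<open>
  Write \<open>T(\<theta>;\<rho>) = \<rho> S(\<theta>) + C t(\<theta>)\<close> with \<open>S = \<plusminus>sin(n\<theta> + c')\<close>,
  \<open>t = sin(m\<theta>)\<close> and \<open>0 < n < m\<close>. The Wronskian \<open>W = S t' - S' t\<close> satisfies
  \<open>W' = (n\<^sup>2 - m\<^sup>2) S t\<close>, so it increases wherever \<open>S t < 0\<close>; there the zeros of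
  \<open>T(\<cdot>;\<rho>)\<close> are the points where \<open>ratio = -C t / S\<close> equals \<open>\<rho>\<close>, and \<open>ratio' = -C W / S\<^sup>2\<close>.

  A simple zero \<open>a\<close> of \<open>T(\<cdot>;\<rho>\<^sub>2)\<close> with \<open>S(a) \<noteq> 0\<close> has \<open>W(a) \<noteq> 0\<close>. Moving from
  \<open>a\<close> in the direction of the sign of \<open>W(a)\<close>, \<open>ratio\<close> decreases from \<open>\<rho>\<^sub>2\<close> while
  \<open>S t\<close> stays negative, and before \<open>S t\<close> vanishes (at a zero of \<open>t\<close>, where
  \<open>ratio = 0\<close>) it passes through \<open>\<rho>\<^sub>1\<close>: this is the partner zero of \<open>T(\<cdot>;\<rho>\<^sub>1)\<close>.
  Common zeros of \<open>S\<close> and \<open>t\<close> are their own partners. Two zeros with the same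
  partner would bound an interval on which \<open>S t < 0\<close>; Rolle's theorem for \<open>ratio\<close> and
  the monotonicity of \<open>W\<close> then contradict the directions in which they were moved.
  Everything commutes with \<open>\<theta> \<mapsto> \<theta> + 2\<pi>\<close>, so partners induce an injection
  between the zeros in \<open>[0, 2\<pi>)\<close>.
\<close>

lemma eventually_nonzero_near_simple_zero:
  fixes f :: "real \<Rightarrow> real"
  assumes deriv: "(f has_real_derivative D) (at x)" and simple: "f x = 0 \<Longrightarrow> D \<noteq> 0"
  shows "\<forall>\<^sub>F y in at x. f y \<noteq> 0"
proof (cases "f x = 0")
  case True
  have "((\<lambda>y. (f y - f x) / (y - x)) \<longlongrightarrow> D) (at x)"
    using deriv has_field_derivative_iff by blast
  then have "\<forall>\<^sub>F y in at x. (f y - f x) / (y - x) \<noteq> 0"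
    using simple True by (intro tendsto_imp_eventually_ne) auto
  then show ?thesis
    using True by (auto elim: eventually_mono)
next
  case False
  have "(f \<longlongrightarrow> f x) (at x)"
    using DERIV_isCont[OF deriv] by (simp add: isCont_def)
  then show ?thesis
    using False by (rule tendsto_imp_eventually_ne)
qed

lemma finite_zeros_if_simple:
  fixes f f' :: "real \<Rightarrow> real"
  assumes "\<And>x. (f has_real_derivative f' x) (at x)" and "\<And>x. f x = 0 \<Longrightarrow> f' x \<noteq> 0"
  shows "finite {x. a \<le> x \<and> x \<le> b \<and> f x = 0}"
proof -
  have "finite ({a..b} \<inter> {x. f x = 0})"
  proof (rule finite_not_islimpt_in_compact)
    show "\<not> z islimpt {x. f x = 0}" for z
      using eventually_nonzero_near_simple_zero[OF assms] by (simp add: islimpt_iff_eventually)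
  qed simp
  then show ?thesis
    by (rule finite_subset[rotated]) auto
qed

lemma sign_change_imp_zero:
  fixes f :: "real \<Rightarrow> real"
  assumes "u \<le> v" and "continuous_on {u..v} f" and "f u * f v < 0"
  shows "\<exists>c. u < c \<and> c < v \<and> f c = 0"
proof -
  obtain c where "u \<le> c" "c \<le> v" "f c = 0"
  proof (cases "f u < 0")
    case True
    then show ?thesis
      using that IVT'[of f u 0 v] assms by (auto simp: mult_less_0_iff)
  next
    case False
    then show ?thesis
      using that IVT2'[of f v 0 u] assms by (auto simp: mult_less_0_iff)
  qed
  moreover have "c \<noteq> u" "c \<noteq> v"
    using \<open>f c = 0\<close> assms(3) by auto
  ultimately show ?thesis
    by (intro exI[of _ c]) auto
qed

lemma last_zero_before:
  fixes f :: "real \<Rightarrow> real"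
  assumes cont: "continuous_on UNIV f" and "f a < 0" and "y0 \<le> a" and "f y0 = 0"
  shows "\<exists>y<a. f y = 0 \<and> (\<forall>x\<in>{y<..a}. f x < 0)"
proof -
  define Z where "Z = {x. x \<le> a \<and> f x = 0}"
  have "closed Z"
    unfolding Z_def by (intro closed_Collect_conj closed_Collect_le closed_Collect_eq cont continuous_intros)
  moreover have "Z \<noteq> {}" and bdd: "bdd_above Z"
    using assms unfolding Z_def by (auto intro: bdd_aboveI[of _ a])
  ultimately have "Sup Z \<in> Z"
    by (rule closed_contains_Sup[rotated -1])
  then have y: "Sup Z < a" "f (Sup Z) = 0"
    using \<open>f a < 0\<close> unfolding Z_def by (auto simp: le_less)
  have "f x < 0" if "Sup Z < x" "x \<le> a" for x
  proof (rule ccontr)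
    assume "\<not> f x < 0"
    then have "f x = 0 \<or> f x * f a < 0"
      using \<open>f a < 0\<close> by (auto simp: mult_less_0_iff)
    moreover have "continuous_on {x..a} f"
      using cont by (rule continuous_on_subset) simp
    ultimately obtain z where "x \<le> z" "z \<le> a" "f z = 0"
      using sign_change_imp_zero[of x a f] \<open>x \<le> a\<close> by (auto intro: order.strict_implies_order)
    then have "z \<le> Sup Z"
      using bdd unfolding Z_def by (auto intro: cSup_upper)
    then show False
      using that \<open>x \<le> z\<close> by linarith
  qed
  then show ?thesis
    using y by auto
qed

lemma card_le_if_periodic_partner:
  fixes P :: real and Q1 Q2 :: "real \<Rightarrow> bool" and R :: "real \<Rightarrow> real \<Rightarrow> bool"
  assumes "0 < P" and "finite {x. 0 \<le> x \<and> x < P \<and> Q1 x}"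
    and Q1_periodic: "\<And>x j. Q1 (x + of_int j * P) \<longleftrightarrow> Q1 x"
    and partner_exists: "\<And>a. Q2 a \<Longrightarrow> \<exists>c. Q1 c \<and> R a c"
    and partner_unique: "\<And>a b c. R a c \<Longrightarrow> R b c \<Longrightarrow> a = b"
    and R_shift: "\<And>a c j. R a c \<Longrightarrow> R (a + of_int j * P) (c + of_int j * P)"
  shows "card {x. 0 \<le> x \<and> x < P \<and> Q2 x} \<le> card {x. 0 \<le> x \<and> x < P \<and> Q1 x}"
proof -
  define partner where "partner a = (SOME c. Q1 c \<and> R a c)" for a
  define shift where "shift c = - \<lfloor>c / P\<rfloor>" for c
  define F where "F a = partner a + of_int (shift (partner a)) * P" for a
  have partner: "Q1 (partner a) \<and> R a (partner a)" if "Q2 a" for a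
    unfolding partner_def by (rule someI_ex) (rule partner_exists[OF that])
  have reduce_range: "0 \<le> c + of_int (shift c) * P \<and> c + of_int (shift c) * P < P" for c
  proof -
    have "c + of_int (shift c) * P = frac (c / P) * P"
      using \<open>0 < P\<close> by (simp add: shift_def frac_def algebra_simps)
    then show ?thesis
      using \<open>0 < P\<close> frac_lt_1[of "c / P"] by simp
  qed
  have image: "F ` {x. 0 \<le> x \<and> x < P \<and> Q2 x} \<subseteq> {x. 0 \<le> x \<and> x < P \<and> Q1 x}"
    using partner reduce_range Q1_periodic unfolding F_def by auto
  have inj: "inj_on F {x. 0 \<le> x \<and> x < P \<and> Q2 x}"
  proof (rule inj_onI)
    fix a b
    assume a: "a \<in> {x. 0 \<le> x \<and> x < P \<and> Q2 x}" and b: "b \<in> {x. 0 \<le> x \<and> x < P \<and> Q2 x}"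
      and "F a = F b"
    define j where "j = shift (partner a) - shift (partner b)"
    have "partner b = partner a + of_int j * P"
      using \<open>F a = F b\<close> unfolding F_def j_def by (simp add: algebra_simps)
    moreover have "R a (partner a)" and "R b (partner b)"
      using partner a b by auto
    ultimately have "R (a + of_int j * P) (partner b)"
      using R_shift[of a "partner a" j] by simp
    then have "a + of_int j * P = b"
      using partner_unique \<open>R b (partner b)\<close> by blast
    then have "of_int j * P < 1 * P" and "-1 * P < of_int j * P"
      using a b by (simp_all only: mem_Collect_eq) linarith+
    then have "of_int j < (1::real)" and "-1 < (of_int j :: real)"
      using mult_less_cancel_right_pos[OF \<open>0 < P\<close>] by blast+
    then have "j = 0"
      by linarith
    then show "a = b"
      using \<open>a + of_int j * P = b\<close> by simp
  qed
  show ?thesis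
    by (rule card_inj_on_le[OF inj image assms(2)])
qed

locale wronskian_comparison =
  fixes S t S' t' :: "real \<Rightarrow> real" and \<kappa> C :: real
  assumes S_deriv: "\<And>x. (S has_real_derivative S' x) (at x)"
    and t_deriv: "\<And>x. (t has_real_derivative t' x) (at x)"
    and wronskian_deriv:
      "\<And>x. ((\<lambda>x. S x * t' x - S' x * t x) has_real_derivative \<kappa> * (S x * t x)) (at x)"
    and kappa_neg: "\<kappa> < 0"
    and C_pos: "0 < C"
    and t_zero_below: "\<And>a. \<exists>y\<le>a. t y = 0"
    and t_zero_above: "\<And>a. \<exists>y\<ge>a. t y = 0"
begin

definition W :: "real \<Rightarrow> real" where
  "W x = S x * t' x - S' x * t x"

definition E :: "real \<Rightarrow> real \<Rightarrow> real" where
  "E \<rho> x = \<rho> * S x + C * t x"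

definition ratio :: "real \<Rightarrow> real" where
  "ratio x = - C * t x / S x"

lemma W_deriv: "(W has_real_derivative \<kappa> * (S x * t x)) (at x)"
  using wronskian_deriv unfolding W_def [abs_def] .

lemma E_deriv: "(E \<rho> has_real_derivative \<rho> * S' x + C * t' x) (at x)"
  unfolding E_def [abs_def] by (auto intro!: derivative_eq_intros S_deriv t_deriv)

lemma deriv_E: "deriv (E \<rho>) x = \<rho> * S' x + C * t' x"
  using E_deriv by (rule DERIV_imp_deriv)

lemma isCont_S: "isCont S x" and isCont_t: "isCont t x" and isCont_E: "isCont (E \<rho>) x"
  using DERIV_isCont S_deriv t_deriv E_deriv by blast+

lemma continuous_on_S: "continuous_on A S"
  by (intro continuous_at_imp_continuous_on ballI isCont_S)

lemma continuous_on_E: "continuous_on A (E \<rho>)"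
  by (intro continuous_at_imp_continuous_on ballI isCont_E)

lemma continuous_on_S_t: "continuous_on A (\<lambda>x. S x * t x)"
  by (intro continuous_at_imp_continuous_on ballI continuous_intros isCont_S isCont_t)

lemma W_mono:
  assumes "u \<le> v" and "\<And>x. u \<le> x \<Longrightarrow> x \<le> v \<Longrightarrow> S x * t x \<le> 0"
  shows "W u \<le> W v"
proof (rule DERIV_nonneg_imp_nondecreasing[OF \<open>u \<le> v\<close>])
  fix x assume "u \<le> x" "x \<le> v"
  then have "0 \<le> \<kappa> * (S x * t x)"
    using assms(2) kappa_neg by (simp add: mult_nonpos_nonpos)
  then show "\<exists>y. (W has_real_derivative y) (at x) \<and> 0 \<le> y"
    using W_deriv by blast
qed

lemma ratio_deriv:
  assumes "S x \<noteq> 0"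
  shows "(ratio has_real_derivative - C * W x / (S x)\<^sup>2) (at x)"
  unfolding ratio_def [abs_def]
  by (rule derivative_eq_intros S_deriv t_deriv refl assms)+
     (simp add: W_def power2_eq_square algebra_simps)

lemma ratio_strict_mono:
  assumes "u < v" and "\<And>x. u \<le> x \<Longrightarrow> x \<le> v \<Longrightarrow> S x \<noteq> 0 \<and> W x < 0"
  shows "ratio u < ratio v"
proof (rule DERIV_pos_imp_increasing[OF \<open>u < v\<close>])
  fix x assume "u \<le> x" "x \<le> v"
  then have "S x \<noteq> 0" and "W x < 0"
    using assms(2) by auto
  then have "C * W x / (S x)\<^sup>2 < 0"
    using C_pos by (intro divide_neg_pos mult_pos_neg) auto
  then have "0 < - C * W x / (S x)\<^sup>2"
    by simp
  then show "\<exists>y. (ratio has_real_derivative y) (at x) \<and> 0 < y"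
    using ratio_deriv[OF \<open>S x \<noteq> 0\<close>] by blast
qed

lemma ratio_eq_if_E_zero: "E \<rho> x = 0 \<Longrightarrow> S x \<noteq> 0 \<Longrightarrow> ratio x = \<rho>"
  by (simp add: E_def ratio_def field_simps)

lemma E_mult_t: "S x \<noteq> 0 \<Longrightarrow> E \<rho> x * t x = S x * t x * (\<rho> - ratio x)"
  by (simp add: E_def ratio_def field_simps)

lemma t_eq_if_E_zero: "E \<rho> x = 0 \<Longrightarrow> C * t x = - \<rho> * S x"
  unfolding E_def by linarith

lemma W_at_E_zero:
  assumes "E \<rho> x = 0"
  shows "C * W x = S x * (\<rho> * S' x + C * t' x)"
proof -
  have "C * W x = S x * (C * t' x) - S' x * (C * t x)"
    by (simp add: W_def algebra_simps)
  then show ?thesis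
    using t_eq_if_E_zero[OF assms] by (simp add: algebra_simps)
qed

lemma S_t_neg_at_E_zero:
  assumes "0 < \<rho>" and "E \<rho> x = 0" and "S x \<noteq> 0"
  shows "S x * t x < 0"
proof -
  have "C * (S x * t x) = S x * (C * t x)"
    by (simp add: algebra_simps)
  also have "\<dots> = - \<rho> * (S x)\<^sup>2"
    using t_eq_if_E_zero[OF assms(2)] by (simp add: power2_eq_square)
  also have "\<dots> < 0"
    using assms(1,3) by simp
  finally show ?thesis
    using C_pos by (simp add: mult_less_0_iff)
qed

lemma W_signs_between_zeros:
  assumes "u < v" and St_neg: "\<And>x. u \<le> x \<Longrightarrow> x \<le> v \<Longrightarrow> S x * t x < 0"
    and "E \<rho> u = 0" and "E \<rho> v = 0"
  shows "W u \<le> 0 \<and> 0 \<le> W v"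
proof -
  have S_nonzero: "S x \<noteq> 0" if "u \<le> x" "x \<le> v" for x
    using St_neg[OF that] by auto
  have ratio_eq: "ratio u = ratio v"
    using ratio_eq_if_E_zero[OF \<open>E \<rho> u = 0\<close> S_nonzero[of u]]
      ratio_eq_if_E_zero[OF \<open>E \<rho> v = 0\<close> S_nonzero[of v]] \<open>u < v\<close> by simp
  have cont: "continuous_on {u..v} ratio"
  proof (rule continuous_at_imp_continuous_on, rule ballI)
    fix x assume "x \<in> {u..v}"
    then show "isCont ratio x"
      using ratio_deriv[OF S_nonzero[of x]] by (simp add: DERIV_isCont)
  qed
  have deriv: "(ratio has_derivative (*) (- C * W x / (S x)\<^sup>2)) (at x)" if "u < x" "x < v" for x
    using ratio_deriv[OF S_nonzero[of x]] that by (simp add: has_field_derivative_def)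
  obtain z where z: "u < z" "z < v" "(*) (- C * W z / (S z)\<^sup>2) = (\<lambda>_. 0)"
    using Rolle_deriv[OF \<open>u < v\<close> ratio_eq cont deriv] by blast
  have "W z = 0"
    using fun_cong[OF z(3), of 1] C_pos S_nonzero[of z] z(1,2) by simp
  have St_nonpos: "S x * t x \<le> 0" if "u \<le> x" "x \<le> v" for x
    using St_neg[OF that] by simp
  have "W u \<le> W z" and "W z \<le> W v"
    using z(1,2) St_nonpos by (intro W_mono; simp)+
  then show ?thesis
    using \<open>W z = 0\<close> by simp
qed

lemma S_nonzero_at_last_zero:
  assumes "y < a" and "S y * t y = 0" and St_neg: "\<And>x. y < x \<Longrightarrow> x \<le> a \<Longrightarrow> S x * t x < 0"
    and "W a < 0" and "E \<rho> a = 0"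
  shows "S y \<noteq> 0"
proof
  assume "S y = 0"
  have St_nonpos: "S x * t x \<le> 0" if "y \<le> x" "x \<le> a" for x
    using that St_neg[of x] \<open>S y * t y = 0\<close> by (cases "x = y") auto
  have W_neg: "W x < 0" if "y \<le> x" "x \<le> a" for x
  proof -
    have "W x \<le> W a"
      using that St_nonpos by (intro W_mono) auto
    then show ?thesis
      using \<open>W a < 0\<close> by simp
  qed
  have "t y \<noteq> 0"
    using W_neg[of y] \<open>y < a\<close> \<open>S y = 0\<close> by (auto simp: W_def)
  \<comment> \<open>Right of \<open>y\<close>, \<open>E \<rho> \<cdot> t\<close> tends to \<open>C t(y)\<^sup>2 > 0\<close>, but \<open>ratio < \<rho>\<close> makes it negative.\<close>
  have "isCont (\<lambda>x. E \<rho> x * t x) y"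
    by (intro continuous_intros isCont_E isCont_t)
  then have "((\<lambda>x. E \<rho> x * t x) \<longlongrightarrow> E \<rho> y * t y) (at_right y)"
    unfolding isCont_def filterlim_at_split by simp
  moreover have "E \<rho> y * t y > 0"
    using \<open>S y = 0\<close> \<open>t y \<noteq> 0\<close> C_pos by (simp add: E_def mult.assoc flip: power2_eq_square)
  ultimately have "\<forall>\<^sub>F x in at_right y. E \<rho> x * t x > 0"
    by (rule order_tendstoD)
  moreover have "\<forall>\<^sub>F x in at_right y. E \<rho> x * t x < 0"
  proof (rule eventually_at_rightI[OF _ \<open>y < a\<close>])
    fix x assume x: "x \<in> {y<..<a}"
    have "S a \<noteq> 0"
      using St_neg[of a] \<open>y < a\<close> by auto
    have "ratio x < ratio a"
    proof (rule ratio_strict_mono)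
      show "x < a"
        using x by simp
      fix z assume "x \<le> z" "z \<le> a"
      then show "S z \<noteq> 0 \<and> W z < 0"
        using x St_neg[of z] W_neg[of z] by auto
    qed
    then have "ratio x < \<rho>"
      using ratio_eq_if_E_zero[OF \<open>E \<rho> a = 0\<close> \<open>S a \<noteq> 0\<close>] by simp
    moreover have "S x * t x < 0"
      using x St_neg by simp
    ultimately show "E \<rho> x * t x < 0"
      by (subst E_mult_t) (auto simp: mult_neg_pos)
  qed
  ultimately have "\<forall>\<^sub>F x in at_right y. False"
    by eventually_elim simp
  then show False
    by simp
qed

lemma exists_partner_left:
  assumes "0 < \<rho>1" and "\<rho>1 < \<rho>2" and "E \<rho>2 a = 0" and "S a \<noteq> 0" and "W a < 0"
  shows "\<exists>c<a. E \<rho>1 c = 0 \<and> (\<forall>x\<in>{c..a}. S x * t x < 0)"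
proof -
  have "S a * t a < 0"
    using assms by (intro S_t_neg_at_E_zero[of \<rho>2]) auto
  obtain y0 where "y0 \<le> a" and "S y0 * t y0 = 0"
    using t_zero_below by (metis mult_zero_right)
  then obtain y where "y < a" and "S y * t y = 0" and St_neg: "\<forall>x\<in>{y<..a}. S x * t x < 0"
    using last_zero_before[OF continuous_on_S_t \<open>S a * t a < 0\<close>] by blast
  have "S y \<noteq> 0"
    using \<open>y < a\<close> \<open>S y * t y = 0\<close> St_neg assms(3,5) by (intro S_nonzero_at_last_zero) auto
  then have "t y = 0"
    using \<open>S y * t y = 0\<close> by simp
  have "0 < S y * S a"
  proof (rule ccontr)
    assume "\<not> 0 < S y * S a"
    then have "S y * S a < 0"
      using \<open>S y \<noteq> 0\<close> \<open>S a \<noteq> 0\<close> by (simp add: not_less le_less)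
    then obtain z where "y < z" "z < a" "S z = 0"
      using sign_change_imp_zero[OF less_imp_le[OF \<open>y < a\<close>] continuous_on_S] by blast
    then show False
      using St_neg[rule_format, of z] by simp
  qed
  have "E \<rho>1 y * E \<rho>1 a = (\<rho>1 * (\<rho>1 - \<rho>2)) * (S y * S a)"
    using \<open>t y = 0\<close> t_eq_if_E_zero[OF assms(3)] by (simp add: E_def algebra_simps)
  also have "\<dots> < 0"
    using assms(1,2) \<open>0 < S y * S a\<close> by (intro mult_neg_pos mult_pos_neg) auto
  finally have "E \<rho>1 y * E \<rho>1 a < 0" .
  then obtain c where "y < c" "c < a" "E \<rho>1 c = 0"
    using sign_change_imp_zero[OF less_imp_le[OF \<open>y < a\<close>] continuous_on_E] by blast
  then show ?thesis
    using St_neg by (intro exI[of _ c]) auto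
qed

lemma reflect:
  "wronskian_comparison (\<lambda>x. S (- x)) (\<lambda>x. t (- x)) (\<lambda>x. - S' (- x)) (\<lambda>x. - t' (- x)) \<kappa> C"
proof
  fix x
  show "((\<lambda>x. S (- x)) has_real_derivative - S' (- x)) (at x)"
    using DERIV_mirror[THEN iffD1, OF S_deriv[of "- x"]] .
  show "((\<lambda>x. t (- x)) has_real_derivative - t' (- x)) (at x)"
    using DERIV_mirror[THEN iffD1, OF t_deriv[of "- x"]] .
  have "((\<lambda>x. - W (- x)) has_real_derivative \<kappa> * (S (- x) * t (- x))) (at x)"
    using DERIV_minus[OF DERIV_mirror[THEN iffD1, OF W_deriv[of "- x"]]] by simp
  then show "((\<lambda>x. S (- x) * - t' (- x) - - S' (- x) * t (- x)) has_real_derivative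
      \<kappa> * (S (- x) * t (- x))) (at x)"
    by (simp add: W_def algebra_simps)
next
  fix a
  show "\<exists>y\<le>a. t (- y) = 0"
    using t_zero_above[of "- a"] by (metis minus_le_iff minus_minus)
  show "\<exists>y\<ge>a. t (- y) = 0"
    using t_zero_below[of "- a"] by (metis le_minus_iff minus_minus)
qed (fact kappa_neg C_pos)+

lemma exists_partner_right:
  assumes "0 < \<rho>1" and "\<rho>1 < \<rho>2" and "E \<rho>2 a = 0" and "S a \<noteq> 0" and "0 < W a"
  shows "\<exists>c>a. E \<rho>1 c = 0 \<and> (\<forall>x\<in>{a..c}. S x * t x < 0)"
proof -
  interpret reflected: wronskian_comparison
      "\<lambda>x. S (- x)" "\<lambda>x. t (- x)" "\<lambda>x. - S' (- x)" "\<lambda>x. - t' (- x)" \<kappa> C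
    by (rule reflect)
  have E_reflected: "reflected.E \<rho> x = E \<rho> (- x)" for \<rho> x
    by (simp add: reflected.E_def E_def)
  have W_reflected: "reflected.W x = - W (- x)" for x
    by (simp add: reflected.W_def W_def)
  obtain c where "c < - a" "E \<rho>1 (- c) = 0" and St_neg: "\<forall>x\<in>{c..- a}. S (- x) * t (- x) < 0"
    using reflected.exists_partner_left[of \<rho>1 \<rho>2 "- a"] assms E_reflected W_reflected by auto
  moreover have "S x * t x < 0" if "x \<in> {a..- c}" for x
    using St_neg[rule_format, of "- x"] that by simp
  ultimately show ?thesis
    by (intro exI[of _ "- c"]) auto
qed

definition zero_partner :: "real \<Rightarrow> real \<Rightarrow> real \<Rightarrow> real \<Rightarrow> bool" where
  "zero_partner \<rho>1 \<rho>2 a c \<longleftrightarrow> E \<rho>2 a = 0 \<and> E \<rho>1 c = 0 \<and>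
     (c = a \<and> S a = 0 \<or> 0 < (c - a) * W a \<and> (\<forall>x\<in>closed_segment a c. S x * t x < 0))"

lemma zero_partner_exists:
  assumes "0 < \<rho>1" and "\<rho>1 < \<rho>2" and "E \<rho>2 a = 0" and "\<rho>2 * S' a + C * t' a \<noteq> 0"
  shows "\<exists>c. E \<rho>1 c = 0 \<and> zero_partner \<rho>1 \<rho>2 a c"
proof (cases "S a = 0")
  case True
  then have "E \<rho>1 a = 0"
    using t_eq_if_E_zero[OF assms(3)] C_pos by (simp add: E_def)
  then show ?thesis
    using True assms(3) unfolding zero_partner_def by blast
next
  case False
  then have "W a \<noteq> 0"
    using W_at_E_zero[OF assms(3)] assms(4) C_pos by auto
  then consider "W a < 0" | "0 < W a"
    by linarith
  then show ?thesis
  proof cases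
    case 1
    then obtain c where "c < a" "E \<rho>1 c = 0" "\<forall>x\<in>{c..a}. S x * t x < 0"
      using exists_partner_left assms(1-3) False by blast
    then show ?thesis
      using 1 assms(3) unfolding zero_partner_def
      by (intro exI[of _ c]) (simp add: closed_segment_eq_real_ivl mult_neg_neg)
  next
    case 2
    then obtain c where "a < c" "E \<rho>1 c = 0" "\<forall>x\<in>{a..c}. S x * t x < 0"
      using exists_partner_right assms(1-3) False by blast
    then show ?thesis
      using 2 assms(3) unfolding zero_partner_def
      by (intro exI[of _ c]) (simp add: closed_segment_eq_real_ivl)
  qed
qed

lemma zero_partner_unique:
  assumes "zero_partner \<rho>1 \<rho>2 a c" and "zero_partner \<rho>1 \<rho>2 b c"
  shows "a = b"
proof -
  have False if "a < b" and a: "zero_partner \<rho>1 \<rho>2 a c" and b: "zero_partner \<rho>1 \<rho>2 b c" for a b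
  proof (cases "c = a \<and> S a = 0 \<or> c = b \<and> S b = 0")
    case True
    then show False
      using a b \<open>a < b\<close> ends_in_segment unfolding zero_partner_def by fastforce
  next
    case False
    then have "0 < (c - a) * W a" and "0 < (c - b) * W b"
      and "\<forall>x\<in>closed_segment a c \<union> closed_segment c b. S x * t x < 0"
      using a b unfolding zero_partner_def by (auto simp: closed_segment_commute)
    moreover have "{a..b} \<subseteq> closed_segment a c \<union> closed_segment c b"
      by (auto simp: closed_segment_eq_real_ivl)
    ultimately have "W a \<le> 0 \<and> 0 \<le> W b"
      using a b \<open>a < b\<close> unfolding zero_partner_def by (intro W_signs_between_zeros) auto
    then show False
      using \<open>0 < (c - a) * W a\<close> \<open>0 < (c - b) * W b\<close> \<open>a < b\<close> by (auto simp: zero_less_mult_iff)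
  qed
  then show ?thesis
    using assms by (metis linorder_neqE_linordered_idom)
qed

end

locale periodic_wronskian_comparison = wronskian_comparison +
  fixes P :: real and \<sigma> :: "int \<Rightarrow> real"
  assumes period_pos: "0 < P"
    and sign_square: "\<And>j. \<sigma> j * \<sigma> j = 1"
    and S_shift: "\<And>j x. S (x + of_int j * P) = \<sigma> j * S x"
    and t_shift: "\<And>j x. t (x + of_int j * P) = \<sigma> j * t x"
    and S'_shift: "\<And>j x. S' (x + of_int j * P) = \<sigma> j * S' x"
    and t'_shift: "\<And>j x. t' (x + of_int j * P) = \<sigma> j * t' x"
begin

lemma E_zero_shift: "E \<rho> (x + of_int j * P) = 0 \<longleftrightarrow> E \<rho> x = 0"
proof -
  have "E \<rho> (x + of_int j * P) = \<sigma> j * E \<rho> x"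
    unfolding E_def S_shift t_shift by (simp add: algebra_simps)
  then show ?thesis
    using sign_square[of j] by auto
qed

lemma W_shift: "W (x + of_int j * P) = W x"
proof -
  have "W (x + of_int j * P) = (\<sigma> j * \<sigma> j) * W x"
    unfolding W_def S_shift t_shift S'_shift t'_shift by (simp add: algebra_simps)
  then show ?thesis
    by (simp add: sign_square)
qed

lemma S_t_shift: "S (x + of_int j * P) * t (x + of_int j * P) = S x * t x"
proof -
  have "S (x + of_int j * P) * t (x + of_int j * P) = (\<sigma> j * \<sigma> j) * (S x * t x)"
    unfolding S_shift t_shift by (simp add: algebra_simps)
  then show ?thesis
    by (simp add: sign_square)
qed

lemma zero_partner_shift:
  assumes "zero_partner \<rho>1 \<rho>2 a c"
  shows "zero_partner \<rho>1 \<rho>2 (a + of_int j * P) (c + of_int j * P)"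
proof -
  have "S x * t x < 0" if "\<forall>x\<in>closed_segment a c. S x * t x < 0"
    and "x \<in> closed_segment (a + of_int j * P) (c + of_int j * P)" for x
    using that(1)[rule_format, of "x - of_int j * P"] that(2)
      S_t_shift[where x = "x - of_int j * P" and j = j]
    by (auto simp: closed_segment_eq_real_ivl split: if_splits)
  then show ?thesis
    using assms S_shift[where x = a and j = j] sign_square[of j]
    unfolding zero_partner_def E_zero_shift W_shift by auto
qed

theorem card_zeros_antimono:
  assumes "0 < \<rho>1" and "\<rho>1 < \<rho>2"
    and simple1: "\<And>x. E \<rho>1 x = 0 \<Longrightarrow> deriv (E \<rho>1) x \<noteq> 0"
    and simple2: "\<And>x. E \<rho>2 x = 0 \<Longrightarrow> deriv (E \<rho>2) x \<noteq> 0"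
  shows "card {x. 0 \<le> x \<and> x < P \<and> E \<rho>2 x = 0} \<le> card {x. 0 \<le> x \<and> x < P \<and> E \<rho>1 x = 0}"
proof (rule card_le_if_periodic_partner[where R = "zero_partner \<rho>1 \<rho>2"])
  have "finite {x. 0 \<le> x \<and> x \<le> P \<and> E \<rho>1 x = 0}"
    using E_deriv simple1 unfolding deriv_E by (rule finite_zeros_if_simple)
  then show "finite {x. 0 \<le> x \<and> x < P \<and> E \<rho>1 x = 0}"
    by (rule finite_subset[rotated]) auto
  show "\<exists>c. E \<rho>1 c = 0 \<and> zero_partner \<rho>1 \<rho>2 a c" if "E \<rho>2 a = 0" for a
    using zero_partner_exists assms(1,2) that simple2[OF that] unfolding deriv_E by blast
qed (use period_pos E_zero_shift zero_partner_unique zero_partner_shift in auto)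

end

lemma n_par_m_par_integrality:
  assumes "2 \<le> q" and "q < p"
  obtains N d :: nat where "n_par p q = real N / 2" and "m_par p q = n_par p q + real d"
    and "0 < N" and "0 < d"
proof -
  define r where "r = r_par p q"
  define a where "a = (p - 1) div r"
  define b where "b = (q - 1) div r"
  have "0 < r"
    using assms by (simp add: r_def r_par_def)
  have "r * a = p - 1" and "r * b = q - 1"
    unfolding a_def b_def r_def r_par_def by simp_all
  then have p_eq: "real p = real r * real a + 1" and q_eq: "real q = real r * real b + 1"
    using assms by (simp_all add: of_nat_diff flip: of_nat_mult)
  have "0 < b"
    using \<open>r * b = q - 1\<close> assms by (cases b) auto
  have "r * b < r * a"
    using \<open>r * a = p - 1\<close> \<open>r * b = q - 1\<close> assms by simp
  then have "b < a"
    by simp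
  have n_eq: "n_par p q = real ((p + 1) * b) / 2"
    using \<open>0 < r\<close> unfolding n_par_def r_def[symmetric] by (simp add: q_eq field_simps)
  moreover have m_eq: "m_par p q = n_par p q + real (a - b)"
    using \<open>0 < r\<close> \<open>b < a\<close> unfolding n_par_def m_par_def r_def[symmetric]
    by (simp add: p_eq q_eq of_nat_diff field_simps)
  show ?thesis
    by (rule that[OF n_eq m_eq]) (use \<open>0 < b\<close> \<open>b < a\<close> in simp_all)
qed

lemma C_par_pos: "2 \<le> q \<Longrightarrow> q < p \<Longrightarrow> 0 < C_par p q"
  unfolding C_par_def A_par_def B_par_def by (intro divide_pos_pos mult_pos_pos) auto

lemma sin_add_int_pi: "sin (x + pi * of_int k) = (if even k then 1 else -1) * sin x"
  by (simp add: sin_add)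

lemma cos_add_int_pi: "cos (x + pi * of_int k) = (if even k then 1 else -1) * cos x"
  by (simp add: cos_add)

lemma periodic_wronskian_comparison_sine_pair:
  fixes n m c C \<epsilon> :: real and N d :: nat
  assumes n_eq: "n = real N / 2" and m_eq: "m = n + real d" and "0 < N" and "0 < d"
    and "0 < C" and "\<epsilon> * \<epsilon> = 1"
  shows "periodic_wronskian_comparison (\<lambda>x. \<epsilon> * sin (n * x + c)) (\<lambda>x. sin (m * x))
    (\<lambda>x. \<epsilon> * (n * cos (n * x + c))) (\<lambda>x. m * cos (m * x)) (n\<^sup>2 - m\<^sup>2) C (2 * pi)
    (\<lambda>j. if even (j * int N) then 1 else -1)"
proof (intro periodic_wronskian_comparison.intro wronskian_comparison.intro
    periodic_wronskian_comparison_axioms.intro)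
  have "0 < n" and "n < m"
    using assms by simp_all
  then show "n\<^sup>2 - m\<^sup>2 < 0"
    by (simp add: power_strict_mono)
  fix x :: real and j :: int
  show "((\<lambda>x. \<epsilon> * sin (n * x + c)) has_real_derivative \<epsilon> * (n * cos (n * x + c))) (at x)"
    and "((\<lambda>x. sin (m * x)) has_real_derivative m * cos (m * x)) (at x)"
    by (auto intro!: derivative_eq_intros)
  show "((\<lambda>x. \<epsilon> * sin (n * x + c) * (m * cos (m * x)) - \<epsilon> * (n * cos (n * x + c)) * sin (m * x))
      has_real_derivative (n\<^sup>2 - m\<^sup>2) * (\<epsilon> * sin (n * x + c) * sin (m * x))) (at x)"
    by (rule derivative_eq_intros refl)+ (simp add: algebra_simps power2_eq_square)
  let ?\<sigma> = "if even (j * int N) then 1 else -1 :: real"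
  have "n * (x + of_int j * (2 * pi)) + c = (n * x + c) + pi * of_int (j * int N)"
    unfolding n_eq by (simp add: algebra_simps)
  then have n_shift: "sin (n * (x + of_int j * (2 * pi)) + c) = ?\<sigma> * sin (n * x + c)"
    "cos (n * (x + of_int j * (2 * pi)) + c) = ?\<sigma> * cos (n * x + c)"
    by (simp_all only: sin_add_int_pi cos_add_int_pi)
  have "m * (x + of_int j * (2 * pi)) = m * x + pi * of_int (j * int N + 2 * (j * int d))"
    unfolding m_eq n_eq by (simp add: algebra_simps)
  moreover have "even (j * int N + 2 * (j * int d)) \<longleftrightarrow> even (j * int N)"
    by simp
  ultimately have m_shift: "sin (m * (x + of_int j * (2 * pi))) = ?\<sigma> * sin (m * x)"
    "cos (m * (x + of_int j * (2 * pi))) = ?\<sigma> * cos (m * x)"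
    by (simp_all only: sin_add_int_pi cos_add_int_pi)
  show "\<epsilon> * sin (n * (x + of_int j * (2 * pi)) + c) = ?\<sigma> * (\<epsilon> * sin (n * x + c))"
    and "sin (m * (x + of_int j * (2 * pi))) = ?\<sigma> * sin (m * x)"
    and "\<epsilon> * (n * cos (n * (x + of_int j * (2 * pi)) + c)) = ?\<sigma> * (\<epsilon> * (n * cos (n * x + c)))"
    and "m * cos (m * (x + of_int j * (2 * pi))) = ?\<sigma> * (m * cos (m * x))"
    unfolding n_shift m_shift by (simp_all only: mult_ac)
next
  fix a :: real
  have "0 < m"
    using assms by simp
  have sin_zero: "sin (m * (of_int k * pi / m)) = 0" for k
    using \<open>0 < m\<close> by (simp add: mult.commute)
  have "of_int \<lfloor>a * m / pi\<rfloor> * pi / m \<le> a"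
    using pos_le_divide_eq[OF pi_gt_zero, THEN iffD1, OF of_int_floor_le]
    by (rule pos_divide_le_eq[OF \<open>0 < m\<close>, THEN iffD2])
  then show "\<exists>y\<le>a. sin (m * y) = 0"
    using sin_zero by blast
  have "a \<le> of_int \<lceil>a * m / pi\<rceil> * pi / m"
    using pos_divide_le_eq[OF pi_gt_zero, THEN iffD1, OF le_of_int_ceiling]
    by (rule pos_le_divide_eq[OF \<open>0 < m\<close>, THEN iffD2])
  then show "\<exists>y\<ge>a. sin (m * y) = 0"
    using sin_zero by blast
qed (use assms in auto)

theorem lemma4p1:
  fixes p q k :: nat and argmu \<rho>1 \<rho>2 :: real
  assumes "q \<ge> 2" and "p > q"
    and "k < r_par p q"
    and "0 < \<rho>1" and "\<rho>1 < \<rho>2"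
    and "simple_zeros p q argmu k \<rho>1"
    and "simple_zeros p q argmu k \<rho>2"
  shows "N_count p q argmu k \<rho>1 \<ge> N_count p q argmu k \<rho>2"
proof -
  obtain N d where nm: "n_par p q = real N / 2" "m_par p q = n_par p q + real d" "0 < N" "0 < d"
    using n_par_m_par_integrality assms(1,2) by blast
  interpret periodic_wronskian_comparison
    "\<lambda>x. (-1) ^ k * sin (n_par p q * x + c'_par p argmu k)" "\<lambda>x. sin (m_par p q * x)"
    "\<lambda>x. (-1) ^ k * (n_par p q * cos (n_par p q * x + c'_par p argmu k))"
    "\<lambda>x. m_par p q * cos (m_par p q * x)" "(n_par p q)\<^sup>2 - (m_par p q)\<^sup>2" "C_par p q"
    "2 * pi" "\<lambda>j. if even (j * int N) then 1 else -1"
    using C_par_pos[OF assms(1,2)]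
    by (intro periodic_wronskian_comparison_sine_pair[OF nm]) (auto simp flip: power_add)
  have T_eq: "T_fun p q argmu k = E"
    unfolding T_fun_def E_def [abs_def] by (simp add: mult_ac)
  show ?thesis
    using assms(4-7) unfolding N_count_def simple_zeros_def T_eq
    by (intro card_zeros_antimono) auto
qed

end
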